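(* Let $L$ be a Lie algebra over a field $F$ and $\tilde L=L\otimes_FE$. Let $\Omega\subset\tilde L$ be a finite family of elements such that the family $\operatorname{ad}(\Omega)=\{\operatorname{ad}(b)\}_{b\in\Omega}$ satisfies (U1) and (U2), and suppose $U_2(\operatorname{ad}(\Omega))=0$. Then $a=\sum_{b\in\Omega}b$ is a sandwich of the Lie algebra $\tilde L$.
   Context: $E$ is the commutative associative $F$-algebra without unit generated by $e_1,e_2,\dots$ with relations $e_i^2=0$; its basis consists of $e_\pi=e_{i_1}\cdots e_{i_r}$ for nonempty finite $\pi=\{i_1<\dots<i_r\}$. $\tilde L=L\otimes_FE$ with $[x\otimes\alpha,y\otimes\beta]=[x,y]\otimes\alpha\beta$. For $D=\operatorname{Der}(L)$, $\tilde D=D\otimes_FE$ acts by derivations on $\tilde L$, and $\tilde D_i=\sum_{\pi\ni i}D\otimes e_\pi$. For $b\in\tilde L$, $\operatorname{ad}(b):x\mapsto[x,b]$ is viewed as an element of $\tilde D$. A finite family $\Omega$ of elements of $\tilde D$ satisfies (U1) if each element lies in some $\tilde D_i$, and (U2) if any two of its elements commute. For such $\Omega$, $U_k(\Omega)=\sum d_1\cdots d_k$, summed over all $k$-element subsets $\{d_1,\dots,d_k\}$ of $\Omega$; $U_0(\Omega)=\mathrm{Id}$. An element $a$ of a Lie algebra $M$ is a sandwich if $\operatorname{ad}(a)^2=0$ and $\operatorname{ad}(a)\operatorname{ad}(c)\operatorname{ad}(a)=0$ for all $c\in M$. *)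

theory Defs
  imports Main "HOL.Vector_Spaces"
begin

definition lie_algebra :: "('k::field \<Rightarrow> 'l::ab_group_add \<Rightarrow> 'l) \<Rightarrow> ('l \<Rightarrow> 'l \<Rightarrow> 'l) \<Rightarrow> bool" where
  "lie_algebra sc br \<longleftrightarrow>
     vector_space sc \<and>
     (\<forall>x y z. br (x + y) z = br x z + br y z) \<and>
     (\<forall>x y z. br x (y + z) = br x y + br x z) \<and>
     (\<forall>c x y. br (sc c x) y = sc c (br x y)) \<and>
     (\<forall>c x y. br x (sc c y) = sc c (br x y)) \<and>
     (\<forall>x. br x x = 0) \<and>
     (\<forall>x y z. br x (br y z) + br y (br z x) + br z (br x y) = 0)"

text \<open>Elements of \<open>L \<otimes>\<^sub>F E\<close>: since \<open>E\<close> has basis \<open>e\<^sub>\<pi>\<close> (\<open>\<pi>\<close> nonempty finite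
set of indices), an element \<open>\<Sum> x\<^sub>\<pi> \<otimes> e\<^sub>\<pi>\<close> is represented by its coefficient
function \<open>\<pi> \<mapsto> x\<^sub>\<pi>\<close>, finitely supported on nonempty finite sets.\<close>
definition tl_elem :: "(nat set \<Rightarrow> 'l::zero) \<Rightarrow> bool" where
  "tl_elem x \<longleftrightarrow> finite {\<pi>. x \<pi> \<noteq> 0} \<and> (\<forall>\<pi>. x \<pi> \<noteq> 0 \<longrightarrow> finite \<pi> \<and> \<pi> \<noteq> {})"

text \<open>Bracket on \<open>L\<otimes>E\<close>: \<open>e\<^sub>\<pi> e\<^sub>\<rho> = e\<^sub>\<pi>\<^sub>\<union>\<^sub>\<rho>\<close> if disjoint, else \<open>0\<close>.\<close>
definition tbr :: "('l \<Rightarrow> 'l \<Rightarrow> 'l) \<Rightarrow> (nat set \<Rightarrow> 'l::comm_monoid_add) \<Rightarrow> (nat set \<Rightarrow> 'l) \<Rightarrow> nat set \<Rightarrow> 'l" where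
  "tbr br x y \<sigma> = (if finite \<sigma> then
      (\<Sum>\<pi>\<in>{\<pi>. \<pi> \<subseteq> \<sigma> \<and> \<pi> \<noteq> {} \<and> \<pi> \<noteq> \<sigma>}. br (x \<pi>) (y (\<sigma> - \<pi>))) else 0)"

definition tad :: "('l \<Rightarrow> 'l \<Rightarrow> 'l) \<Rightarrow> (nat set \<Rightarrow> 'l::comm_monoid_add) \<Rightarrow> (nat set \<Rightarrow> 'l) \<Rightarrow> (nat set \<Rightarrow> 'l)" where
  "tad br b = (\<lambda>x. tbr br x b)"

text \<open>\<open>ad(b) = \<Sum> ad(b\<^sub>\<pi>) \<otimes> e\<^sub>\<pi>\<close> lies in \<open>D\<^sub>i = \<Sum>\<^sub>\<pi>\<^sub>\<ni>\<^sub>i D \<otimes> e\<^sub>\<pi>\<close>: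
  every component \<open>ad(b\<^sub>\<pi>)\<close> with \<open>i \<notin> \<pi>\<close> is the zero derivation.\<close>
definition ad_in_Dtilde :: "('l \<Rightarrow> 'l \<Rightarrow> 'l) \<Rightarrow> (nat set \<Rightarrow> 'l::zero) \<Rightarrow> nat \<Rightarrow> bool" where
  "ad_in_Dtilde br b i \<longleftrightarrow> (\<forall>\<pi>. i \<notin> \<pi> \<longrightarrow> (\<lambda>y. br y (b \<pi>)) = (\<lambda>y. 0))"

definition Uk :: "nat \<Rightarrow> nat set \<Rightarrow> (nat \<Rightarrow> ((nat set \<Rightarrow> 'l) \<Rightarrow> (nat set \<Rightarrow> 'l))) \<Rightarrow> (nat set \<Rightarrow> 'l::comm_monoid_add) \<Rightarrow> (nat set \<Rightarrow> 'l)" where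
  "Uk k I d = (\<lambda>x \<sigma>. \<Sum>S\<in>{S. S \<subseteq> I \<and> card S = k}.
       foldr (\<circ>) (map d (sorted_list_of_set S)) id x \<sigma>)"

definition tsandwich :: "('l \<Rightarrow> 'l \<Rightarrow> 'l) \<Rightarrow> (nat set \<Rightarrow> 'l::comm_monoid_add) \<Rightarrow> bool" where
  "tsandwich br a \<longleftrightarrow>
     (\<forall>x. tl_elem x \<longrightarrow> tad br a (tad br a x) = (\<lambda>_. 0)) \<and>
     (\<forall>c x. tl_elem c \<longrightarrow> tl_elem x \<longrightarrow> tad br a (tad br c (tad br a x)) = (\<lambda>_. 0))"

end

theory Submission
  imports Defs
begin

text \<open>
  Write \<open>d\<^sub>i = ad(b\<^sub>i)\<close>. Each \<open>b\<^sub>i\<close> lies in some \<open>D\<^sub>n\<close>, and since \<open>e\<^sub>n\<^sup>2 = 0\<close> it is itself a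
  sandwich. Expanding \<open>ad(a) = \<Sum> d\<^sub>i\<close>, the diagonal terms of \<open>ad(a)\<^sup>2\<close> and of
  \<open>ad(a) ad(c) ad(a)\<close> therefore vanish. In \<open>ad(a)\<^sup>2\<close> the off-diagonal terms add up to
  \<open>2 U\<^sub>2 = 0\<close> because the \<open>d\<^sub>i\<close> commute. In \<open>ad(a) ad(c) ad(a)\<close> the Jacobi identity (as the
  derivation rule for \<open>ad\<close>) rewrites \<open>d\<^sub>j ad(c) d\<^sub>i + d\<^sub>i ad(c) d\<^sub>j\<close> applied to \<open>x\<close> as
  \<open>[[[x,c],b\<^sub>i],b\<^sub>j] + [[[x,b\<^sub>j],b\<^sub>i],c] - [x,[[c,b\<^sub>i],b\<^sub>j]]\<close>; summed over \<open>i < j\<close> these are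
  \<open>U\<^sub>2\<close> applied to \<open>[x,c]\<close>, \<open>ad(c)\<close> applied to \<open>U\<^sub>2 x\<close>, and \<open>ad(U\<^sub>2 c)\<close> applied to \<open>x\<close>.
  Only the additive structure of \<open>L\<close> enters.
\<close>

locale lie_ring =
  fixes br :: "'l::ab_group_add \<Rightarrow> 'l \<Rightarrow> 'l"
  assumes add_left: "br (x + y) z = br x z + br y z"
    and add_right: "br x (y + z) = br x y + br x z"
    and alternating: "br x x = 0"
    and jacobi: "br x (br y z) + br y (br z x) + br z (br x y) = 0"
begin

lemma additive_left: "additive (\<lambda>x. br x y)"
  by unfold_locales (rule add_left)

lemma additive_right: "additive (br x)"
  by unfold_locales (rule add_right)

lemmas zero_left [simp] = additive.zero [OF additive_left]
  and zero_right [simp] = additive.zero [OF additive_right]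
  and diff_left = additive.diff [OF additive_left]
  and sum_left = additive.sum [OF additive_left]
  and sum_right = additive.sum [OF additive_right]
  and minus_left = additive.minus [OF additive_left]
  and minus_right = additive.minus [OF additive_right]

lemma anticommute: "br x y = - br y x"
proof -
  have "br (x + y) (x + y) = br x x + br y x + (br x y + br y y)"
    by (simp only: add_left add_right)
  then show ?thesis by (simp add: alternating eq_neg_iff_add_eq_0 add.commute)
qed

lemma jacobi_right: "br x (br y z) = br (br x y) z - br (br x z) y"
proof -
  have "br y (br z x) = br (br x z) y" "br z (br x y) = - br (br x y) z"
    by (subst anticommute, simp add: anticommute [of z x] minus_left minus_right)+
  then show ?thesis using jacobi [of x y z] by (simp add: algebra_simps)
qed

end

definition nonempty_proper_subsets :: "nat set \<Rightarrow> nat set set" where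
  "nonempty_proper_subsets \<sigma> = {\<pi>. \<pi> \<subseteq> \<sigma> \<and> \<pi> \<noteq> {} \<and> \<pi> \<noteq> \<sigma>}"

definition ordered_tripartitions :: "nat set \<Rightarrow> (nat set \<times> nat set \<times> nat set) set" where
  "ordered_tripartitions \<sigma> = {(\<pi>, \<rho>, \<tau>). \<pi> \<union> \<rho> \<union> \<tau> = \<sigma> \<and>
     \<pi> \<inter> \<rho> = {} \<and> \<pi> \<inter> \<tau> = {} \<and> \<rho> \<inter> \<tau> = {} \<and> \<pi> \<noteq> {} \<and> \<rho> \<noteq> {} \<and> \<tau> \<noteq> {}}"

lemma finite_nonempty_proper_subsets: "finite \<sigma> \<Longrightarrow> finite (nonempty_proper_subsets \<sigma>)"
  unfolding nonempty_proper_subsets_def by (rule finite_subset [of _ "Pow \<sigma>"]) auto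

lemma tbr_finite:
  "finite \<sigma> \<Longrightarrow> tbr br x y \<sigma> = (\<Sum>\<pi>\<in>nonempty_proper_subsets \<sigma>. br (x \<pi>) (y (\<sigma> - \<pi>)))"
  by (simp add: tbr_def nonempty_proper_subsets_def)

lemma tbr_infinite: "infinite \<sigma> \<Longrightarrow> tbr br x y \<sigma> = 0"
  by (simp add: tbr_def)

lemma sum_ordered_tripartitions_swap:
  "(\<Sum>(\<pi>, \<rho>, \<tau>)\<in>ordered_tripartitions \<sigma>. f \<pi> \<rho> \<tau>) =
    (\<Sum>(\<pi>, \<rho>, \<tau>)\<in>ordered_tripartitions \<sigma>. f \<pi> \<tau> \<rho>)"
  by (rule sum.reindex_bij_witness [where i = "\<lambda>(\<pi>, \<rho>, \<tau>). (\<pi>, \<tau>, \<rho>)"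
        and j = "\<lambda>(\<pi>, \<rho>, \<tau>). (\<pi>, \<tau>, \<rho>)"])
    (auto simp: ordered_tripartitions_def)

context lie_ring
begin

lemma tbr_sum_left: "tbr br (\<lambda>\<pi>. \<Sum>i\<in>S. f i \<pi>) y = (\<lambda>\<sigma>. \<Sum>i\<in>S. tbr br (f i) y \<sigma>)"
proof
  show "tbr br (\<lambda>\<pi>. \<Sum>i\<in>S. f i \<pi>) y \<sigma> = (\<Sum>i\<in>S. tbr br (f i) y \<sigma>)" for \<sigma>
    by (cases "finite \<sigma>") (simp_all add: tbr_finite tbr_infinite sum_left sum.swap [of _ S])
qed

lemma tbr_sum_right: "tbr br x (\<lambda>\<pi>. \<Sum>i\<in>S. f i \<pi>) = (\<lambda>\<sigma>. \<Sum>i\<in>S. tbr br x (f i) \<sigma>)"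
proof
  show "tbr br x (\<lambda>\<pi>. \<Sum>i\<in>S. f i \<pi>) \<sigma> = (\<Sum>i\<in>S. tbr br x (f i) \<sigma>)" for \<sigma>
    by (cases "finite \<sigma>") (simp_all add: tbr_finite tbr_infinite sum_right sum.swap [of _ S])
qed

lemma tbr_diff_left: "tbr br (\<lambda>\<pi>. f \<pi> - g \<pi>) y \<sigma> = tbr br f y \<sigma> - tbr br g y \<sigma>"
  by (cases "finite \<sigma>") (simp_all add: tbr_finite tbr_infinite diff_left sum_subtractf)

lemma tbr_zero_left [simp]: "tbr br (\<lambda>_. 0) y = (\<lambda>_. 0)"
  by (simp add: tbr_def fun_eq_iff)

lemma tbr_zero_right [simp]: "tbr br x (\<lambda>_. 0) = (\<lambda>_. 0)"
  by (simp add: tbr_def fun_eq_iff)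

lemma tbr_tbr_right:
  assumes "finite \<sigma>"
  shows "tbr br x (tbr br p q) \<sigma> =
    (\<Sum>(\<pi>, \<rho>, \<tau>)\<in>ordered_tripartitions \<sigma>. br (x \<pi>) (br (p \<rho>) (q \<tau>)))"
proof -
  let ?A = nonempty_proper_subsets
  have "tbr br x (tbr br p q) \<sigma> =
      (\<Sum>\<pi>\<in>?A \<sigma>. \<Sum>\<rho>\<in>?A (\<sigma> - \<pi>). br (x \<pi>) (br (p \<rho>) (q (\<sigma> - \<pi> - \<rho>))))"
    using assms by (simp add: tbr_finite sum_right)
  also have "\<dots> = (\<Sum>(\<pi>, \<rho>)\<in>Sigma (?A \<sigma>) (\<lambda>\<pi>. ?A (\<sigma> - \<pi>)). br (x \<pi>) (br (p \<rho>) (q (\<sigma> - \<pi> - \<rho>))))"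
    using assms by (subst sum.Sigma) (auto simp: finite_nonempty_proper_subsets)
  also have "\<dots> = (\<Sum>(\<pi>, \<rho>, \<tau>)\<in>ordered_tripartitions \<sigma>. br (x \<pi>) (br (p \<rho>) (q \<tau>)))"
    by (rule sum.reindex_bij_witness [where i = "\<lambda>(\<pi>, \<rho>, \<tau>). (\<pi>, \<rho>)"
          and j = "\<lambda>(\<pi>, \<rho>). (\<pi>, \<rho>, \<sigma> - \<pi> - \<rho>)"])
      (auto simp: ordered_tripartitions_def nonempty_proper_subsets_def)
  finally show ?thesis .
qed

lemma tbr_tbr_left:
  assumes "finite \<sigma>"
  shows "tbr br (tbr br x p) q \<sigma> =
    (\<Sum>(\<pi>, \<rho>, \<tau>)\<in>ordered_tripartitions \<sigma>. br (br (x \<pi>) (p \<rho>)) (q \<tau>))"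
proof -
  let ?A = nonempty_proper_subsets
  have finite_parts: "finite \<alpha>" if "\<alpha> \<in> ?A \<sigma>" for \<alpha>
    using that assms by (auto simp: nonempty_proper_subsets_def intro: finite_subset)
  have "tbr br (tbr br x p) q \<sigma> =
      (\<Sum>\<alpha>\<in>?A \<sigma>. \<Sum>\<pi>\<in>?A \<alpha>. br (br (x \<pi>) (p (\<alpha> - \<pi>))) (q (\<sigma> - \<alpha>)))"
    using assms finite_parts by (simp add: tbr_finite sum_left cong: sum.cong)
  also have "\<dots> = (\<Sum>(\<alpha>, \<pi>)\<in>Sigma (?A \<sigma>) ?A. br (br (x \<pi>) (p (\<alpha> - \<pi>))) (q (\<sigma> - \<alpha>)))"
    using assms finite_parts by (subst sum.Sigma) (auto simp: finite_nonempty_proper_subsets)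
  also have "\<dots> = (\<Sum>(\<pi>, \<rho>, \<tau>)\<in>ordered_tripartitions \<sigma>. br (br (x \<pi>) (p \<rho>)) (q \<tau>))"
    by (rule sum.reindex_bij_witness [where i = "\<lambda>(\<pi>, \<rho>, \<tau>). (\<pi> \<union> \<rho>, \<pi>)"
          and j = "\<lambda>(\<alpha>, \<pi>). (\<pi>, \<alpha> - \<pi>, \<sigma> - \<alpha>)"])
      (auto simp: ordered_tripartitions_def nonempty_proper_subsets_def, blast, blast)
  finally show ?thesis .
qed

lemma tbr_jacobi: "tbr br x (tbr br p q) \<sigma> = tbr br (tbr br x p) q \<sigma> - tbr br (tbr br x q) p \<sigma>"
proof (cases "finite \<sigma>")
  case True
  have "tbr br (tbr br x q) p \<sigma> =
      (\<Sum>(\<pi>, \<rho>, \<tau>)\<in>ordered_tripartitions \<sigma>. br (br (x \<pi>) (q \<tau>)) (p \<rho>))"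
    unfolding tbr_tbr_left [OF True]
    by (rule sum_ordered_tripartitions_swap [where f = "\<lambda>\<pi> \<rho> \<tau>. br (br (x \<pi>) (q \<rho>)) (p \<tau>)"])
  then show ?thesis
    by (simp add: tbr_tbr_right [OF True] tbr_tbr_left [OF True] jacobi_right
        sum_subtractf [symmetric] case_prod_unfold)
qed (simp add: tbr_infinite)

lemma tbr_double_jacobi:
  "tbr br x (tbr br (tbr br c u) v) \<sigma> =
     tbr br (tbr br (tbr br x c) u) v \<sigma> - tbr br (tbr br (tbr br x u) c) v \<sigma>
     - (tbr br (tbr br (tbr br x v) c) u \<sigma> - tbr br (tbr br (tbr br x v) u) c \<sigma>)"
proof -
  have "tbr br x (tbr br c u) = (\<lambda>\<tau>. tbr br (tbr br x c) u \<tau> - tbr br (tbr br x u) c \<tau>)"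
    by (rule ext) (rule tbr_jacobi)
  then show ?thesis
    by (simp only: tbr_jacobi [of x "tbr br c u" v] tbr_jacobi [of "tbr br x v" c u]
        tbr_diff_left)
qed

lemma tbr_nonzeroE:
  assumes "tbr br x y \<sigma> \<noteq> 0"
  obtains \<pi> where "x \<pi> \<noteq> 0" "y (\<sigma> - \<pi>) \<noteq> 0" "\<pi> \<subseteq> \<sigma>" "finite \<sigma>"
proof -
  have "finite \<sigma>" using assms tbr_infinite by blast
  with assms have "(\<Sum>\<pi>\<in>nonempty_proper_subsets \<sigma>. br (x \<pi>) (y (\<sigma> - \<pi>))) \<noteq> 0"
    by (simp add: tbr_finite)
  then obtain \<pi> where \<pi>: "\<pi> \<in> nonempty_proper_subsets \<sigma>" "br (x \<pi>) (y (\<sigma> - \<pi>)) \<noteq> 0"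
    by (rule sum.not_neutral_contains_not_neutral)
  from \<pi>(2) have "x \<pi> \<noteq> 0" "y (\<sigma> - \<pi>) \<noteq> 0" by auto
  with \<pi>(1) \<open>finite \<sigma>\<close> show thesis
    by (intro that) (auto simp: nonempty_proper_subsets_def)
qed

lemma tl_elem_tbr:
  assumes "tl_elem x" "tl_elem y"
  shows "tl_elem (tbr br x y)"
proof -
  have "{\<sigma>. tbr br x y \<sigma> \<noteq> 0} \<subseteq> (\<lambda>(\<pi>, \<rho>). \<pi> \<union> \<rho>) ` ({\<pi>. x \<pi> \<noteq> 0} \<times> {\<rho>. y \<rho> \<noteq> 0})"
    (is "_ \<subseteq> ?unions")
  proof
    fix \<sigma> assume "\<sigma> \<in> {\<sigma>. tbr br x y \<sigma> \<noteq> 0}"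
    then obtain \<pi> where "x \<pi> \<noteq> 0" "y (\<sigma> - \<pi>) \<noteq> 0" "\<pi> \<subseteq> \<sigma>"
      by (auto elim: tbr_nonzeroE)
    then show "\<sigma> \<in> (\<lambda>(\<pi>, \<rho>). \<pi> \<union> \<rho>) ` ({\<pi>. x \<pi> \<noteq> 0} \<times> {\<rho>. y \<rho> \<noteq> 0})"
      by (intro image_eqI [of _ _ "(\<pi>, \<sigma> - \<pi>)"]) auto
  qed
  moreover have "finite ?unions"
    using assms by (simp add: tl_elem_def)
  ultimately have "finite {\<sigma>. tbr br x y \<sigma> \<noteq> 0}"
    by (rule finite_subset)
  moreover have "finite \<sigma> \<and> \<sigma> \<noteq> {}" if "tbr br x y \<sigma> \<noteq> 0" for \<sigma>
    using that assms(1) by (elim tbr_nonzeroE) (auto simp: tl_elem_def)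
  ultimately show ?thesis
    by (simp add: tl_elem_def)
qed

lemma tbr_Dtilde_eq_0_if_notin:
  assumes "ad_in_Dtilde br b n" "n \<notin> \<alpha>"
  shows "tbr br x b \<alpha> = 0"
proof (cases "finite \<alpha>")
  case True
  have "br (x \<pi>) (b (\<alpha> - \<pi>)) = 0" for \<pi>
    using assms by (simp add: ad_in_Dtilde_def fun_eq_iff)
  with True show ?thesis by (simp add: tbr_finite)
qed (simp add: tbr_infinite)

lemma tbr_eq_0_if_vanishes_below:
  assumes "\<And>\<pi>. \<pi> \<subseteq> \<alpha> \<Longrightarrow> y \<pi> = 0"
  shows "tbr br y c \<alpha> = 0"
  using assms
  by (cases "finite \<alpha>") (simp_all add: tbr_finite tbr_infinite nonempty_proper_subsets_def)

lemma tbr_Dtilde_eq_0_if_support_contains: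
  assumes "ad_in_Dtilde br b n" "\<And>\<alpha>. n \<notin> \<alpha> \<Longrightarrow> y \<alpha> = 0"
  shows "tbr br y b = (\<lambda>_. 0)"
proof
  fix \<sigma>
  have "br (y \<alpha>) (b (\<sigma> - \<alpha>)) = 0" for \<alpha>
  proof (cases "n \<in> \<sigma> - \<alpha>")
    case False
    with assms(1) show ?thesis by (simp add: ad_in_Dtilde_def fun_eq_iff)
  qed (simp add: assms(2))
  then show "tbr br y b \<sigma> = 0"
    by (cases "finite \<sigma>") (simp_all add: tbr_finite tbr_infinite)
qed

text \<open>Since \<open>e\<^sub>n\<^sup>2 = 0\<close>, every term of \<open>ad(b) X ad(b)\<close> vanishes.\<close>

lemma ad_in_Dtilde_imp_tsandwich:
  assumes "ad_in_Dtilde br b n"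
  shows "tsandwich br b"
proof -
  have "tbr br (tbr br x b) b = (\<lambda>_. 0)" for x
    using assms by (rule tbr_Dtilde_eq_0_if_support_contains) (rule tbr_Dtilde_eq_0_if_notin [OF assms])
  moreover have "tbr br (tbr br (tbr br x b) c) b = (\<lambda>_. 0)" for x c
    using assms by (rule tbr_Dtilde_eq_0_if_support_contains)
      (auto intro: tbr_eq_0_if_vanishes_below tbr_Dtilde_eq_0_if_notin [OF assms])
  ultimately show ?thesis by (simp add: tsandwich_def tad_def)
qed

end

definition increasing_pairs :: "nat set \<Rightarrow> (nat \<times> nat) set" where
  "increasing_pairs I = {(i, j). i \<in> I \<and> j \<in> I \<and> i < j}"

lemma card_two_increasing:
  assumes "card S = 2"
  obtains i j :: nat where "i < j" "S = {i, j}"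
proof -
  obtain i j where "S = {i, j}" "i \<noteq> j" using assms by (auto simp: card_2_iff)
  then show thesis
    by (metis insert_commute linorder_neqE_nat that)
qed

lemma card_two_subsets_eq_doubletons:
  "{S. S \<subseteq> I \<and> card S = 2} = (\<lambda>(i, j). {i, j}) ` increasing_pairs I"
  by (auto simp: increasing_pairs_def elim!: card_two_increasing)

lemma Uk_two: "Uk 2 I d x \<sigma> = (\<Sum>(i, j)\<in>increasing_pairs I. d i (d j x) \<sigma>)"
proof -
  have "inj_on (\<lambda>(i, j). {i, j}) (increasing_pairs I)"
    by (auto simp: inj_on_def increasing_pairs_def doubleton_eq_iff)
  moreover have "sorted_list_of_set {i, j} = [i, j]" if "(i, j) \<in> increasing_pairs I" for i j
    using that by (simp add: increasing_pairs_def)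
  ultimately show ?thesis
    by (simp add: Uk_def card_two_subsets_eq_doubletons sum.reindex case_prod_unfold
        cong: sum.cong)
qed

lemma sum_square_diagonal_pairs:
  fixes g :: "nat \<Rightarrow> nat \<Rightarrow> 'a::comm_monoid_add"
  assumes "finite I"
  shows "(\<Sum>i\<in>I. \<Sum>j\<in>I. g i j) = (\<Sum>i\<in>I. g i i) + (\<Sum>(i, j)\<in>increasing_pairs I. g i j + g j i)"
proof -
  let ?D = "(\<lambda>i. (i, i)) ` I" and ?P = "increasing_pairs I"
  have finite_pairs: "finite ?P"
    using assms by (auto simp: increasing_pairs_def intro: finite_subset [of _ "I \<times> I"])
  have cover: "I \<times> I = ?D \<union> (?P \<union> prod.swap ` ?P)"
    by (auto simp: increasing_pairs_def image_iff)
  have "(\<Sum>i\<in>I. \<Sum>j\<in>I. g i j) = (\<Sum>(i, j)\<in>I \<times> I. g i j)"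
    by (simp add: sum.cartesian_product)
  also have "\<dots> = (\<Sum>(i, j)\<in>?D. g i j) + (\<Sum>(i, j)\<in>?P \<union> prod.swap ` ?P. g i j)"
    unfolding cover using assms finite_pairs
    by (intro sum.union_disjoint) (auto simp: increasing_pairs_def)
  also have "(\<Sum>(i, j)\<in>?P \<union> prod.swap ` ?P. g i j) =
      (\<Sum>(i, j)\<in>?P. g i j) + (\<Sum>(i, j)\<in>prod.swap ` ?P. g i j)"
    using finite_pairs by (intro sum.union_disjoint) (auto simp: increasing_pairs_def)
  also have "(\<Sum>(i, j)\<in>?D. g i j) + ((\<Sum>(i, j)\<in>?P. g i j) + (\<Sum>(i, j)\<in>prod.swap ` ?P. g i j)) =
      (\<Sum>i\<in>I. g i i) + (\<Sum>(i, j)\<in>?P. g i j + g j i)"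
    by (simp add: sum.reindex [OF inj_swap] sum.reindex inj_on_def sum.distrib case_prod_unfold)
  finally show ?thesis .
qed

context lie_ring
begin

context
  fixes I :: "nat set" and b :: "nat \<Rightarrow> nat set \<Rightarrow> 'l"
  assumes finite_I: "finite I"
    and sandwiches: "\<forall>i\<in>I. tsandwich br (b i)"
    and commuting: "\<forall>i\<in>I. \<forall>j\<in>I. \<forall>x. tl_elem x \<longrightarrow>
      tad br (b i) (tad br (b j) x) = tad br (b j) (tad br (b i) x)"
    and U2_zero: "\<forall>x. tl_elem x \<longrightarrow> Uk 2 I (\<lambda>i. tad br (b i)) x = (\<lambda>_. 0)"
begin

lemma increasing_pair_sums_eq_0:
  assumes "tl_elem x"
  shows "(\<Sum>(i, j)\<in>increasing_pairs I. tbr br (tbr br x (b j)) (b i) \<sigma>) = 0"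
    and "(\<Sum>(i, j)\<in>increasing_pairs I. tbr br (tbr br x (b i)) (b j) \<sigma>) = 0"
proof -
  have "Uk 2 I (\<lambda>i. tad br (b i)) x \<sigma> = 0"
    using U2_zero assms by simp
  then show vanish: "(\<Sum>(i, j)\<in>increasing_pairs I. tbr br (tbr br x (b j)) (b i) \<sigma>) = 0"
    by (simp add: Uk_two tad_def)
  have swap: "tbr br (tbr br x (b i)) (b j) = tbr br (tbr br x (b j)) (b i)"
    if "(i, j) \<in> increasing_pairs I" for i j
  proof -
    from that have "i \<in> I" "j \<in> I" by (simp_all add: increasing_pairs_def)
    with commuting assms show ?thesis unfolding tad_def by blast
  qed
  have "(\<Sum>(i, j)\<in>increasing_pairs I. tbr br (tbr br x (b i)) (b j) \<sigma>) =
      (\<Sum>(i, j)\<in>increasing_pairs I. tbr br (tbr br x (b j)) (b i) \<sigma>)"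
    by (intro sum.cong refl) (clarify, rule fun_cong, rule swap)
  with vanish show "(\<Sum>(i, j)\<in>increasing_pairs I. tbr br (tbr br x (b i)) (b j) \<sigma>) = 0"
    by simp
qed

lemma ad_sum_squared_eq_0:
  assumes "tl_elem x"
  shows "tbr br (tbr br x (\<lambda>\<pi>. \<Sum>i\<in>I. b i \<pi>)) (\<lambda>\<pi>. \<Sum>i\<in>I. b i \<pi>) \<sigma> = 0"
proof -
  let ?g = "\<lambda>j i. tbr br (tbr br x (b i)) (b j) \<sigma>"
  have "tbr br (tbr br x (\<lambda>\<pi>. \<Sum>i\<in>I. b i \<pi>)) (\<lambda>\<pi>. \<Sum>i\<in>I. b i \<pi>) \<sigma> =
      (\<Sum>j\<in>I. \<Sum>i\<in>I. ?g j i)"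
    by (simp add: tbr_sum_right tbr_sum_left)
  also have "\<dots> = (\<Sum>i\<in>I. ?g i i) + (\<Sum>(i, j)\<in>increasing_pairs I. ?g i j + ?g j i)"
    by (rule sum_square_diagonal_pairs [OF finite_I])
  also have "(\<Sum>i\<in>I. ?g i i) = 0"
    using sandwiches assms by (simp add: tsandwich_def tad_def)
  also have "(\<Sum>(i, j)\<in>increasing_pairs I. ?g i j + ?g j i) = 0"
    using increasing_pair_sums_eq_0 [OF assms] by (simp add: sum.distrib case_prod_unfold)
  finally show ?thesis by simp
qed

lemma ad_sum_ad_ad_sum_eq_0:
  assumes "tl_elem x" "tl_elem c"
  shows "tbr br (tbr br (tbr br x (\<lambda>\<pi>. \<Sum>i\<in>I. b i \<pi>)) c) (\<lambda>\<pi>. \<Sum>i\<in>I. b i \<pi>) \<sigma> = 0"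
proof -
  let ?h = "\<lambda>j i. tbr br (tbr br (tbr br x (b i)) c) (b j) \<sigma>"
  let ?P = "increasing_pairs I"
  have "tbr br (tbr br (tbr br x (\<lambda>\<pi>. \<Sum>i\<in>I. b i \<pi>)) c) (\<lambda>\<pi>. \<Sum>i\<in>I. b i \<pi>) \<sigma> =
      (\<Sum>j\<in>I. \<Sum>i\<in>I. ?h j i)"
    by (simp add: tbr_sum_right tbr_sum_left)
  also have "\<dots> = (\<Sum>i\<in>I. ?h i i) + (\<Sum>(i, j)\<in>?P. ?h i j + ?h j i)"
    by (rule sum_square_diagonal_pairs [OF finite_I])
  also have "(\<Sum>i\<in>I. ?h i i) = 0"
    using sandwiches assms by (simp add: tsandwich_def tad_def)
  also have "(\<Sum>(i, j)\<in>?P. ?h i j + ?h j i) =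
      (\<Sum>(i, j)\<in>?P. tbr br (tbr br (tbr br x c) (b i)) (b j) \<sigma>)
      + (\<Sum>(i, j)\<in>?P. tbr br (tbr br (tbr br x (b j)) (b i)) c \<sigma>)
      - (\<Sum>(i, j)\<in>?P. tbr br x (tbr br (tbr br c (b i)) (b j)) \<sigma>)"
  proof -
    have "?h i j + ?h j i = tbr br (tbr br (tbr br x c) (b i)) (b j) \<sigma>
        + tbr br (tbr br (tbr br x (b j)) (b i)) c \<sigma>
        - tbr br x (tbr br (tbr br c (b i)) (b j)) \<sigma>" for i j
      using tbr_double_jacobi [of x c "b i" "b j" \<sigma>] by (simp add: algebra_simps)
    then show ?thesis by (simp add: sum.distrib sum_subtractf case_prod_unfold)
  qed
  also have "\<dots> = (\<Sum>(i, j)\<in>?P. tbr br (tbr br (tbr br x c) (b i)) (b j) \<sigma>)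
      + tbr br (\<lambda>\<tau>. \<Sum>(i, j)\<in>?P. tbr br (tbr br x (b j)) (b i) \<tau>) c \<sigma>
      - tbr br x (\<lambda>\<tau>. \<Sum>(i, j)\<in>?P. tbr br (tbr br c (b i)) (b j) \<tau>) \<sigma>"
    by (simp only: case_prod_unfold tbr_sum_left tbr_sum_right)
  also have "\<dots> = 0"
    using increasing_pair_sums_eq_0 tl_elem_tbr assms by simp
  finally show ?thesis by simp
qed

lemma tsandwich_sum: "tsandwich br (\<lambda>\<pi>. \<Sum>i\<in>I. b i \<pi>)"
  unfolding tsandwich_def tad_def using ad_sum_squared_eq_0 ad_sum_ad_ad_sum_eq_0 by blast

end

end

theorem lemma12:
  fixes sc :: "'k::field \<Rightarrow> 'l::ab_group_add \<Rightarrow> 'l"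
    and br :: "'l \<Rightarrow> 'l \<Rightarrow> 'l"
    and I :: "nat set" and b :: "nat \<Rightarrow> nat set \<Rightarrow> 'l"
  assumes "lie_algebra sc br"
    and "finite I"
    and "\<forall>i\<in>I. tl_elem (b i)"
    and U1: "\<forall>i\<in>I. \<exists>n. ad_in_Dtilde br (b i) n"
    and U2: "\<forall>i\<in>I. \<forall>j\<in>I. \<forall>x. tl_elem x \<longrightarrow>
               tad br (b i) (tad br (b j) x) = tad br (b j) (tad br (b i) x)"
    and "\<forall>x. tl_elem x \<longrightarrow> Uk 2 I (\<lambda>i. tad br (b i)) x = (\<lambda>_. 0)"
  shows "tsandwich br (\<lambda>\<pi>. \<Sum>i\<in>I. b i \<pi>)"
proof -
  have "lie_ring br"
    using assms(1) by (simp add: lie_algebra_def lie_ring_def)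
  then interpret lie_ring br .
  have "\<forall>i\<in>I. tsandwich br (b i)"
    using U1 ad_in_Dtilde_imp_tsandwich by blast
  then show ?thesis
    using tsandwich_sum assms(2) U2 assms(6) by blast
qed

end
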